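(* In the setting and notation of the context, for every $x\in(-1,1)$, \[W(x)=V_-(x)V_-(x)^\ast=V_+(x)V_+(x)^\ast=\widehat V_-(x)\widehat V_-(x)^\ast=\widehat V_+(x)\widehat V_+(x)^\ast,\] where $V_\pm(x)=\lim_{\varepsilon\to0+}V(x\pm i\varepsilon)$ and $\widehat V_\pm(x)=\lim_{\varepsilon\to0+}\widehat V(x\pm i\varepsilon)$.
   Context: Fix $r\ge1$, $\alpha,\beta>-1$ and $H:[-1,1]\to\mathbb C^{r\times r}$ with $H(x)$ Hermitian positive definite for $x\in(-1,1)$, $H$ real analytic on $[-1,1]$, and $H(\pm1)$ not the zero matrix. Put $W(x)=(1-x)^\alpha(1+x)^\beta H(x)$. Fix a factorization $H(x)=Q(x)\Lambda(x)Q(x)^\ast$ on $[-1,1]$ with $Q(x)$ unitary, $\Lambda(x)=\mathrm{diag}(\lambda_1(x),\dots,\lambda_r(x))$, and $Q,\Lambda$ real analytic on $[-1,1]$ (such a choice exists by Rellich's theorem); $Q,\lambda_j$ also denote their analytic continuations to a convex complex neighborhood $N$ of $[-1,1]$ in which no $\lambda_j$ vanishes except possibly at $\pm1$. Let $n_j$ (resp. $m_j$) be the order of vanishing of $\lambda_j$ at $1$ (resp. $-1$), equal to $0$ if $\lambda_j$ does not vanish there. Set $\widetilde\lambda_j=(-1)^{n_j}\lambda_j$ (positive on $(1,1+\delta)$ for small $\delta>0$) and let $\widetilde\lambda_j^{1/2}$ be the analytic continuation to $N\setminus(-\infty,1]$ of its positive square root on $(1,1+\delta)$; define $V(z)=(z-1)^{\alpha/2}(z+1)^{\beta/2}Q(z)\,\mathrm{diag}(\widetilde\lambda_1(z)^{1/2},\dots,\widetilde\lambda_r(z)^{1/2})$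 on $N\setminus(-\infty,1]$ (principal branches). Similarly set $\widehat\lambda_j=(-1)^{m_j}\lambda_j$ (positive on $(-1-\delta,-1)$), let $\widehat\lambda_j^{1/2}$ be the analytic continuation to $N\setminus[-1,\infty)$ of its positive square root on $(-1-\delta,-1)$, and define $\widehat V(z)=(1-z)^{\alpha/2}(-1-z)^{\beta/2}Q(z)\,\mathrm{diag}(\widehat\lambda_1(z)^{1/2},\dots,\widehat\lambda_r(z)^{1/2})$ on $N\setminus[-1,\infty)$ (principal branches). *)

theory Defs
  imports "HOL-Complex_Analysis.Complex_Analysis"
begin

(* r x r complex matrices are rendered as complex^'n^'n with r = CARD('n) *)

definition mat_adj :: "complex^'n^'m \<Rightarrow> complex^'m^'n" where
  "mat_adj A = (\<chi> i j. cnj (A $ j $ i))"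

definition cdiag :: "('n \<Rightarrow> complex) \<Rightarrow> complex^'n^'n" where
  "cdiag d = (\<chi> i j. if i = j then d i else 0)"

definition cscale :: "complex \<Rightarrow> complex^'n^'m \<Rightarrow> complex^'n^'m" where
  "cscale c A = (\<chi> i j. c * A $ i $ j)"

definition unitary_mat :: "complex^'n^'n \<Rightarrow> bool" where
  "unitary_mat U \<longleftrightarrow> U ** mat_adj U = mat 1 \<and> mat_adj U ** U = mat 1"

definition herm_pos_def :: "complex^'n^'n \<Rightarrow> bool" where
  "herm_pos_def A \<longleftrightarrow> mat_adj A = A \<and>
     (\<forall>v::complex^'n. v \<noteq> 0 \<longrightarrow>
        (let q = (\<Sum>i\<in>UNIV. \<Sum>j\<in>UNIV. cnj (v $ i) * A $ i $ j * v $ j) in Im q = 0 \<and> Re q > 0))"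

definition vanish_order :: "(complex \<Rightarrow> complex) \<Rightarrow> complex \<Rightarrow> nat" where
  "vanish_order f z = nat (zorder f z)"

(* V(z) = (z-1)^(alpha/2) (z+1)^(beta/2) Q(z) diag(s_1(z),...,s_r(z)), principal branches *)
definition V_plus1 :: "real \<Rightarrow> real \<Rightarrow> (complex \<Rightarrow> complex^'n^'n) \<Rightarrow> ('n \<Rightarrow> complex \<Rightarrow> complex)
     \<Rightarrow> complex \<Rightarrow> complex^'n^'n" where
  "V_plus1 \<alpha> \<beta> Q s z =
     cscale ((z - 1) powr (of_real (\<alpha>/2)) * (z + 1) powr (of_real (\<beta>/2)))
            (Q z ** cdiag (\<lambda>j. s j z))"

(* hat V(z) = (1-z)^(alpha/2) (-1-z)^(beta/2) Q(z) diag(t_1(z),...,t_r(z)), principal branches *)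
definition V_minus1 :: "real \<Rightarrow> real \<Rightarrow> (complex \<Rightarrow> complex^'n^'n) \<Rightarrow> ('n \<Rightarrow> complex \<Rightarrow> complex)
     \<Rightarrow> complex \<Rightarrow> complex^'n^'n" where
  "V_minus1 \<alpha> \<beta> Q t z =
     cscale ((1 - z) powr (of_real (\<alpha>/2)) * (-1 - z) powr (of_real (\<beta>/2)))
            (Q z ** cdiag (\<lambda>j. t j z))"

definition bv_factor :: "(complex \<Rightarrow> complex^'n^'n) \<Rightarrow> real \<Rightarrow> real \<Rightarrow> complex^'n^'n \<Rightarrow> bool" where
  "bv_factor F sg x Wx \<longleftrightarrow>
     (\<exists>L. ((\<lambda>\<epsilon>::real. F (of_real x + of_real sg * \<i> * of_real \<epsilon>)) \<longlongrightarrow> L) (at_right 0)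
          \<and> Wx = L ** mat_adj L)"

end

theory Submission
  imports Defs
begin

(* On (-1,1) the eigenvalues lambda_j are positive, so W(x) = |w(x)|^2 Q(x) diag(lambda_j(x)) Q(x)^*
   with w(z) = (z-1)^(alpha/2) (z+1)^(beta/2). Every factor of V has a boundary value from each
   half-plane: the powers because crossing their branch cut only multiplies them by a constant of
   modulus one, Q by continuity, and the square roots because, by the identity theorem applied from
   the interval (1, 1+delta), the continuation of the root of (-1)^n_j lambda_j still squares to
   (-1)^n_j lambda_j on each half-plane of N. Near x it is therefore a unimodular constant times
   the principal root of lambda_j, whose boundary value has modulus squared lambda_j(x). Hence
   V_+-(x) V_+-(x)^* = W(x); for hat V the roles of 1 and -1 are exchanged. *)

lemma half_plane_Im:
  shows open_half_plane_Im: "open {z::complex. 0 < sg * Im z}"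
    and convex_half_plane_Im: "convex {z::complex. 0 < sg * Im z}"
  using open_halfspace_gt[of 0 "sg *\<^sub>R \<i>"] convex_halfspace_gt[of 0 "sg *\<^sub>R \<i>"] by simp_all

lemma continuous_square_roots_proportional:
  fixes f h :: "'a::topological_space \<Rightarrow> complex"
  assumes "connected B" "continuous_on B f" "continuous_on B h"
    and "\<forall>z\<in>B. h z \<noteq> 0" and "\<forall>z\<in>B. f z ^ 2 = c * h z ^ 2"
  shows "\<exists>a. a ^ 2 = c \<and> (\<forall>z\<in>B. f z = a * h z)"
proof -
  define k where "k z = f z / h z" for z
  have k_sq: "k z ^ 2 = c" if "z \<in> B" for z
    using assms(4,5) that by (simp add: k_def power_divide)
  have "k ` B \<subseteq> {csqrt c, - csqrt c}"
    using k_sq by (auto simp: power2_eq_iff[of _ "csqrt c", simplified])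
  then have "k constant_on B"
    using assms(1-4)
    by (intro continuous_finite_range_constant) (auto simp: k_def intro!: continuous_intros dest: finite_subset)
  then obtain a where a: "\<forall>z\<in>B. k z = a"
    by (auto simp: constant_on_def)
  show ?thesis
  proof (cases "B = {}")
    case True
    then show ?thesis by (intro exI[of _ "csqrt c"]) simp
  next
    case False
    then show ?thesis
      using a k_sq assms(4) by (intro exI[of _ a]) (auto simp: k_def field_simps)
  qed
qed

lemma tendsto_within_sqrt_branch:
  fixes s g :: "complex \<Rightarrow> complex"
  assumes "convex S" "open N" "x0 \<in> N"
    and s: "continuous_on (N \<inter> S) s" "\<forall>z\<in>N \<inter> S. s z ^ 2 = c * g z"
    and g: "continuous_on N g" "g x0 \<notin> \<real>\<^sub>\<le>\<^sub>0"
  shows "\<exists>L. (s \<longlongrightarrow> L) (at x0 within S) \<and> cmod L ^ 2 = cmod c * cmod (g x0)"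
proof -
  have "open (N \<inter> g -` (- \<real>\<^sub>\<le>\<^sub>0))"
    using g(1) \<open>open N\<close> by (intro continuous_open_preimage) auto
  moreover have "x0 \<in> N \<inter> g -` (- \<real>\<^sub>\<le>\<^sub>0)"
    using \<open>x0 \<in> N\<close> g(2) by simp
  ultimately obtain r where r: "r > 0" "ball x0 r \<subseteq> N \<inter> g -` (- \<real>\<^sub>\<le>\<^sub>0)"
    using open_contains_ball by blast
  define B where "B = ball x0 r \<inter> S"
  have g_B: "continuous_on B g" "\<forall>z\<in>B. g z \<notin> \<real>\<^sub>\<le>\<^sub>0"
    using r by (auto simp: B_def intro: continuous_on_subset[OF g(1)])
  have "\<exists>a. a ^ 2 = c \<and> (\<forall>z\<in>B. s z = a * csqrt (g z))"
  proof (rule continuous_square_roots_proportional)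
    show "connected B"
      using \<open>convex S\<close> by (simp add: B_def convex_connected convex_Int)
    show "continuous_on B s"
      using r by (intro continuous_on_subset[OF s(1)]) (auto simp: B_def)
    show "continuous_on B (\<lambda>z. csqrt (g z))"
      using g_B by (intro continuous_on_compose2[OF continuous_on_csqrt g_B(1)]) auto
    show "\<forall>z\<in>B. csqrt (g z) \<noteq> 0" "\<forall>z\<in>B. s z ^ 2 = c * csqrt (g z) ^ 2"
      using g_B(2) s(2) r by (auto simp: B_def)
  qed
  then obtain a where a: "a ^ 2 = c" "\<forall>z\<in>B. s z = a * csqrt (g z)"
    by blast
  have "((\<lambda>z. a * csqrt (g z)) \<longlongrightarrow> a * csqrt (g x0)) (at x0 within S)"
    using g \<open>open N\<close> \<open>x0 \<in> N\<close>
    by (intro tendsto_intros tendsto_within_subset[OF continuous_at_csqrt[THEN isCont_tendsto_compose]])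
      (auto simp: continuous_on_eq_continuous_at isCont_def intro: tendsto_within_subset)
  moreover have "eventually (\<lambda>z. a * csqrt (g z) = s z) (at x0 within S)"
    using a(2) r(1) by (auto simp: B_def eventually_at dist_commute intro!: exI[of _ r])
  ultimately have "(s \<longlongrightarrow> a * csqrt (g x0)) (at x0 within S)"
    by (rule Lim_transform_eventually)
  moreover have "cmod (a * csqrt (g x0)) ^ 2 = cmod c * cmod (g x0)"
    using a(1) by (auto simp: norm_mult power_mult_distrib norm_power[symmetric])
  ultimately show ?thesis
    by blast
qed

lemma analytic_continuation_from_real_interval:
  fixes g :: "complex \<Rightarrow> complex"
  assumes N: "open N" "convex N" and R: "closed R" "R \<subseteq> \<real>"
    and g: "g holomorphic_on N - R"
    and I: "a < b" "of_real ` {a<..<b} \<subseteq> N - R" "\<forall>y\<in>{a<..<b}. g (of_real y) = 0"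
    and z: "sg \<noteq> 0" "z \<in> N" "0 < sg * Im z"
  shows "g z = 0"
proof -
  define q where "q = (a + b) / 2"
  have "q \<in> {a<..<b}"
    using I(1) by (simp add: q_def)
  then have "of_real q \<in> N - R"
    using I(2) by blast
  moreover have "open (N - R)"
    using N R by (simp add: open_Diff)
  ultimately obtain \<rho> where \<rho>: "\<rho> > 0" "ball (of_real q) \<rho> \<subseteq> N - R"
    by (meson open_contains_ball)
  define b' where "b' = min (q + \<rho>) b"
  have "q < b'"
    using I(1) \<rho>(1) by (simp add: b'_def q_def)
  define S where "S = (N \<inter> {z. 0 < sg * Im z}) \<union> ball (of_real q) \<rho>"
  have "N \<inter> {z. 0 < sg * Im z} \<subseteq> N - R"
    using R(2) by (auto simp: complex_is_Real_iff)
  then have "g holomorphic_on S"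
    using \<rho> by (auto simp: S_def intro: holomorphic_on_subset[OF g])
  moreover have "open S"
    using N(1) by (simp add: S_def open_Int open_Un open_half_plane_Im)
  moreover have "connected S"
    unfolding S_def
  proof (intro connected_Un convex_connected convex_Int N(2) convex_half_plane_Im convex_ball)
    define p where "p = of_real q + \<i> * of_real (sgn sg * \<rho> / 2)"
    have "p \<in> ball (of_real q) \<rho>" "0 < sg * Im p"
      using \<rho>(1) z(1) by (auto simp: p_def dist_norm norm_mult sgn_if zero_less_mult_iff)
    then show "N \<inter> {z. 0 < sg * Im z} \<inter> ball (of_real q) \<rho> \<noteq> {}"
      using \<rho>(2) by blast
  qed
  moreover have "(of_real ` {q<..<b'} :: complex set) \<subseteq> ball (of_real q) \<rho>"
    by (auto simp: b'_def dist_real_def)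
  moreover have "of_real q islimpt (of_real ` {q<..<b'} :: complex set)"
    using \<open>q < b'\<close>
    by (intro islimpt_isCont_image islimpt_greaterThanLessThan1) (auto simp: eventually_at_filter)
  moreover have "\<forall>y\<in>{q<..<b'}. g (of_real y) = 0"
    using I(3) by (auto simp: b'_def q_def)
  ultimately show "g z = 0"
    using analytic_continuation[of g S "of_real ` {q<..<b'}" "of_real q" z] \<rho>(1) z
    by (auto simp: S_def)
qed

lemma sqrt_branch_boundary_limit:
  fixes s lam :: "complex \<Rightarrow> complex"
  assumes N: "open N" "convex N" and R: "closed R" "R \<subseteq> \<real>"
    and lam: "lam holomorphic_on N" and s: "s holomorphic_on N - R"
    and I: "a < b" "of_real ` {a<..<b} \<subseteq> N - R"
      "\<forall>y\<in>{a<..<b}. s (of_real y) = csqrt (c * lam (of_real y))"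
    and x0: "x0 \<in> N" "lam x0 \<notin> \<real>\<^sub>\<le>\<^sub>0" and sg: "sg \<noteq> 0"
  shows "\<exists>L. (s \<longlongrightarrow> L) (at x0 within {z. 0 < sg * Im z}) \<and> cmod L ^ 2 = cmod c * cmod (lam x0)"
proof (rule tendsto_within_sqrt_branch[where g = lam, OF convex_half_plane_Im N(1) x0(1) _ _ _ x0(2)])
  have "N \<inter> {z. 0 < sg * Im z} \<subseteq> N - R"
    using R(2) by (auto simp: complex_is_Real_iff)
  then show "continuous_on (N \<inter> {z. 0 < sg * Im z}) s"
    by (rule holomorphic_on_imp_continuous_on[OF holomorphic_on_subset[OF s]])
  show "continuous_on N lam"
    using lam by (rule holomorphic_on_imp_continuous_on)
  show "\<forall>z\<in>N \<inter> {z. 0 < sg * Im z}. s z ^ 2 = c * lam z"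
  proof
    fix z assume z: "z \<in> N \<inter> {z. 0 < sg * Im z}"
    have "(\<lambda>z. s z ^ 2 - c * lam z) holomorphic_on N - R"
      using s holomorphic_on_subset[OF lam] by (intro holomorphic_intros) auto
    then have "s z ^ 2 - c * lam z = 0"
      using I sg z by (intro analytic_continuation_from_real_interval[OF N R _ I(1,2)]) auto
    then show "s z ^ 2 = c * lam z"
      by simp
  qed
qed

lemma sqrt_branch_boundary_limit_right:
  fixes s lam :: "complex \<Rightarrow> complex"
  assumes N: "open N" "convex N" "of_real p \<in> N"
    and lam: "lam holomorphic_on N" and s: "s holomorphic_on N - {z. z \<in> \<real> \<and> Re z \<le> p}"
    and s_right: "\<exists>\<delta>>0. \<forall>y\<in>{p<..<p+\<delta>}. s (of_real y) = csqrt (c * lam (of_real y))"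
    and x0: "x0 \<in> N" "lam x0 \<notin> \<real>\<^sub>\<le>\<^sub>0" and sg: "sg \<noteq> 0"
  shows "\<exists>L. (s \<longlongrightarrow> L) (at x0 within {z. 0 < sg * Im z}) \<and> cmod L ^ 2 = cmod c * cmod (lam x0)"
proof -
  obtain \<delta> where \<delta>: "\<delta> > 0" "\<forall>y\<in>{p<..<p+\<delta>}. s (of_real y) = csqrt (c * lam (of_real y))"
    using s_right by blast
  obtain e where e: "e > 0" "ball (of_real p) e \<subseteq> N"
    using N(1,3) open_contains_ball by blast
  have "of_real ` {p<..<p + min \<delta> e} \<subseteq> N - {z. z \<in> \<real> \<and> Re z \<le> p}"
    using e by (auto simp: dist_real_def intro!: subsetD[OF e(2)])
  moreover have "closed {z. z \<in> \<real> \<and> Re z \<le> p}"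
    using closed_Int[OF closed_complex_Reals closed_halfspace_Re_le] by (simp add: Collect_conj_eq)
  ultimately show ?thesis
    using \<delta> e(1) by (intro sqrt_branch_boundary_limit[OF N(1,2) _ _ lam s, of p "p + min \<delta> e"] x0 sg) auto
qed

lemma sqrt_branch_boundary_limit_left:
  fixes s lam :: "complex \<Rightarrow> complex"
  assumes N: "open N" "convex N" "of_real p \<in> N"
    and lam: "lam holomorphic_on N" and s: "s holomorphic_on N - {z. z \<in> \<real> \<and> Re z \<ge> p}"
    and s_left: "\<exists>\<delta>>0. \<forall>y\<in>{p-\<delta><..<p}. s (of_real y) = csqrt (c * lam (of_real y))"
    and x0: "x0 \<in> N" "lam x0 \<notin> \<real>\<^sub>\<le>\<^sub>0" and sg: "sg \<noteq> 0"
  shows "\<exists>L. (s \<longlongrightarrow> L) (at x0 within {z. 0 < sg * Im z}) \<and> cmod L ^ 2 = cmod c * cmod (lam x0)"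
proof -
  obtain \<delta> where \<delta>: "\<delta> > 0" "\<forall>y\<in>{p-\<delta><..<p}. s (of_real y) = csqrt (c * lam (of_real y))"
    using s_left by blast
  obtain e where e: "e > 0" "ball (of_real p) e \<subseteq> N"
    using N(1,3) open_contains_ball by blast
  have "of_real ` {p - min \<delta> e<..<p} \<subseteq> N - {z. z \<in> \<real> \<and> Re z \<ge> p}"
    using e by (auto simp: dist_real_def intro!: subsetD[OF e(2)])
  moreover have "closed {z. z \<in> \<real> \<and> Re z \<ge> p}"
    using closed_Int[OF closed_complex_Reals closed_halfspace_Re_ge] by (simp add: Collect_conj_eq)
  ultimately show ?thesis
    using \<delta> e(1) by (intro sqrt_branch_boundary_limit[OF N(1,2) _ _ lam s, of "p - min \<delta> e" p] x0 sg) auto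
qed

lemma tendsto_powr_half_plane:
  fixes u sg a :: real
  assumes u: "u \<noteq> 0" and sg: "sg \<noteq> 0"
  shows "\<exists>L. ((\<lambda>z. z powr of_real a) \<longlongrightarrow> L) (at (of_real u) within {z. 0 < sg * Im z})
           \<and> cmod L = \<bar>u\<bar> powr a"
proof -
  let ?F = "at (of_real u) within {z. 0 < sg * Im z}"
  show ?thesis
  proof (cases "u > 0")
    case True
    then have "((\<lambda>z. z powr of_real a) \<longlongrightarrow> of_real u powr of_real a) ?F"
      by (intro tendsto_powr_complex tendsto_ident_at tendsto_const) (auto simp: complex_nonpos_Reals_iff)
    then show ?thesis
      by (auto simp: norm_powr_real_powr')
  next
    case False
    with u have "u < 0"
      by simp
    define E where "E = exp (of_real a * \<i> * of_real (sgn sg * pi))"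
    have "(- z) powr of_real a * E = z powr of_real a" if "0 < sg * Im z" for z
    proof -
      have "z \<noteq> 0"
        using that by auto
      moreover have "Ln z = Ln (- z) + \<i> * of_real (sgn sg * pi)"
        using Ln_minus[of "- z"] that \<open>z \<noteq> 0\<close> by (auto simp: sgn_if zero_less_mult_iff)
      ultimately show ?thesis
        by (simp add: powr_def E_def distrib_left mult_ac flip: exp_add)
    qed
    then have "eventually (\<lambda>z. (- z) powr of_real a * E = z powr of_real a) ?F"
      by (auto simp: eventually_at_filter)
    moreover have "((\<lambda>z. (- z) powr of_real a * E) \<longlongrightarrow> (- of_real u) powr of_real a * E) ?F"
      using \<open>u < 0\<close> by (intro tendsto_intros tendsto_powr_complex) (auto simp: complex_nonpos_Reals_iff)
    ultimately have "((\<lambda>z. z powr of_real a) \<longlongrightarrow> (- of_real u) powr of_real a * E) ?F"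
      by (rule Lim_transform_eventually[rotated])
    moreover have "cmod ((- of_real u) powr of_real a * E) = \<bar>u\<bar> powr a"
      using \<open>u < 0\<close> by (simp add: E_def norm_mult norm_powr_real_powr' norm_exp_eq_Re)
    ultimately show ?thesis
      by blast
  qed
qed

lemma tendsto_affine_powr_half_plane:
  fixes m c x sg a :: real
  assumes m: "m \<noteq> 0" and mxc: "m * x + c \<noteq> 0" and sg: "sg \<noteq> 0"
  shows "\<exists>L. ((\<lambda>z. (of_real m * z + of_real c) powr of_real a) \<longlongrightarrow> L) (at (of_real x) within {z. 0 < sg * Im z})
           \<and> cmod L = \<bar>m * x + c\<bar> powr a"
proof -
  let ?F = "at (of_real x) within {z. 0 < sg * Im z}"
  obtain L where L: "((\<lambda>w. w powr of_real a) \<longlongrightarrow> L) (at (of_real (m * x + c)) within {w. 0 < m * sg * Im w})"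
      "cmod L = \<bar>m * x + c\<bar> powr a"
    using tendsto_powr_half_plane[OF mxc, of "m * sg" a] m sg by auto
  have "filterlim (\<lambda>z. of_real m * z + of_real c)
      (at (of_real (m * x + c)) within {w. 0 < m * sg * Im w}) ?F"
  proof (rule filterlim_at_withinI)
    show "filterlim (\<lambda>z. of_real m * z + of_real c) (nhds (of_real (m * x + c))) ?F"
      by (intro tendsto_eq_intros) auto
    have "0 < m * sg * Im (of_real m * z + of_real c)" if "0 < sg * Im z" for z
    proof -
      have "m * sg * Im (of_real m * z + of_real c) = m\<^sup>2 * (sg * Im z)"
        by (simp add: power2_eq_square mult_ac)
      then show ?thesis
        using that m by (simp only:) simp
    qed
    then show "eventually (\<lambda>z. of_real m * z + of_real c \<in> {w. 0 < m * sg * Im w} - {of_real (m * x + c)}) ?F"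
      using m by (auto simp: eventually_at_filter)
  qed
  then show ?thesis
    using filterlim_compose[OF L(1)] L(2) by blast
qed

lemma jacobi_root_boundary_limit:
  fixes x m sg \<alpha> \<beta> :: real
  assumes x: "x \<in> {-1<..<1}" and m: "\<bar>m\<bar> = 1" and sg: "sg \<noteq> 0"
  shows "\<exists>L. ((\<lambda>z. (of_real m * z - of_real m) powr of_real (\<alpha>/2) * (of_real m * z + of_real m) powr of_real (\<beta>/2))
              \<longlongrightarrow> L) (at (of_real x) within {z. 0 < sg * Im z})
           \<and> cmod L ^ 2 = (1 - x) powr \<alpha> * (1 + x) powr \<beta>"
proof -
  let ?F = "at (of_real x) within {z. 0 < sg * Im z}"
  have m_cases: "m = 1 \<or> m = -1"
    using m by auto
  then have "m \<noteq> 0" "m * x + (- m) \<noteq> 0" "m * x + m \<noteq> 0"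
    using x by auto
  then obtain L1 L2 where
      L1: "((\<lambda>z. (of_real m * z + of_real (- m)) powr of_real (\<alpha>/2)) \<longlongrightarrow> L1) ?F"
        "cmod L1 = \<bar>m * x + (- m)\<bar> powr (\<alpha>/2)" and
      L2: "((\<lambda>z. (of_real m * z + of_real m) powr of_real (\<beta>/2)) \<longlongrightarrow> L2) ?F"
        "cmod L2 = \<bar>m * x + m\<bar> powr (\<beta>/2)"
    using tendsto_affine_powr_half_plane[OF _ _ sg] by blast
  have "\<bar>m * x + (- m)\<bar> = 1 - x" "\<bar>m * x + m\<bar> = 1 + x"
    using x m_cases by auto
  moreover have "(y powr (e / 2))\<^sup>2 = y powr e" for y e :: real
    by (simp add: power2_eq_square flip: powr_add)
  ultimately have "cmod (L1 * L2) ^ 2 = (1 - x) powr \<alpha> * (1 + x) powr \<beta>"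
    by (simp add: L1(2) L2(2) norm_mult power_mult_distrib)
  then show ?thesis
    using tendsto_mult[OF L1(1) L2(1)] by auto
qed

lemma matrix_mult_cdiag_nth: "(A ** cdiag d) $ i $ j = A $ i $ j * d j"
  by (simp add: cdiag_def matrix_matrix_mult_def if_distrib cong: if_cong)

lemma cscale_mult_cdiag_mult_adj:
  fixes A :: "complex^'n^'m"
  shows "cscale f (A ** cdiag d) ** mat_adj (cscale f (A ** cdiag d))
           = (cmod f ^ 2) *\<^sub>R (A ** cdiag (\<lambda>j. of_real (cmod (d j) ^ 2)) ** mat_adj A)"
proof -
  have norm_sq: "(of_real (cmod w))\<^sup>2 = w * cnj w" for w
    using complex_norm_square[of w] by simp
  have mult_adj_nth: "(B ** mat_adj C) $ i $ k = (\<Sum>j\<in>UNIV. B $ i $ j * cnj (C $ k $ j))"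
    for B C :: "complex^'n^'m" and i k
    by (simp add: matrix_matrix_mult_def mat_adj_def)
  show ?thesis
    by (simp add: vec_eq_iff cscale_def mult_adj_nth matrix_mult_cdiag_nth
        scaleR_conv_of_real[where 'a = complex] norm_sq sum_distrib_left mult_ac)
qed

lemma tendsto_cscale_mult_cdiag:
  fixes A :: "'a \<Rightarrow> complex^'n^'m" and d :: "'n \<Rightarrow> 'a \<Rightarrow> complex"
  assumes "(f \<longlongrightarrow> fL) F" "\<forall>i j. ((\<lambda>z. A z $ i $ j) \<longlongrightarrow> AL $ i $ j) F" "\<forall>j. (d j \<longlongrightarrow> dL j) F"
  shows "((\<lambda>z. cscale (f z) (A z ** cdiag (\<lambda>j. d j z))) \<longlongrightarrow> cscale fL (AL ** cdiag dL)) F"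
  using assms unfolding cscale_def by (intro vec_tendstoI) (simp add: matrix_mult_cdiag_nth tendsto_mult)

lemma bv_factor_of_tendsto_within:
  assumes F: "(F \<longlongrightarrow> L) (at (of_real x) within {z. 0 < sg * Im z})" and sg: "sg \<noteq> 0"
  shows "bv_factor F sg x (L ** mat_adj L)"
proof -
  have "filterlim (\<lambda>\<epsilon>::real. of_real x + of_real sg * \<i> * of_real \<epsilon>)
      (at (of_real x) within {z. 0 < sg * Im z}) (at_right 0)"
  proof (rule filterlim_at_withinI)
    show "filterlim (\<lambda>\<epsilon>::real. of_real x + of_real sg * \<i> * of_real \<epsilon>) (nhds (of_real x)) (at_right 0)"
      by (intro tendsto_eq_intros) auto
    show "eventually (\<lambda>\<epsilon>. of_real x + of_real sg * \<i> * of_real \<epsilon> \<in> {z. 0 < sg * Im z} - {of_real x})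
        (at_right 0)"
      using eventually_at_right_less[of 0]
      by eventually_elim (use sg in \<open>auto simp: complex_eq_iff zero_less_mult_iff mult_less_0_iff\<close>)
  qed
  then show ?thesis
    unfolding bv_factor_def using filterlim_compose[OF F] by blast
qed

lemma bv_factor_of_boundary_limits:
  fixes Q :: "complex \<Rightarrow> complex^'n^'n" and s :: "'n \<Rightarrow> complex \<Rightarrow> complex"
  assumes sg: "sg \<noteq> 0"
    and f: "\<exists>fL. (f \<longlongrightarrow> fL) (at (of_real x) within {z. 0 < sg * Im z}) \<and> cmod fL ^ 2 = w"
    and s: "\<forall>j. \<exists>L. (s j \<longlongrightarrow> L) (at (of_real x) within {z. 0 < sg * Im z}) \<and> cmod L ^ 2 = cmod (d j)"
    and d: "\<forall>j. d j \<in> \<real>\<^sub>\<ge>\<^sub>0"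
    and Q: "\<forall>i j. isCont (\<lambda>z. Q z $ i $ j) (of_real x)"
  shows "bv_factor (\<lambda>z. cscale (f z) (Q z ** cdiag (\<lambda>j. s j z))) sg x
           (w *\<^sub>R (Q (of_real x) ** cdiag d ** mat_adj (Q (of_real x))))"
proof -
  let ?F = "at (of_real x) within {z. 0 < sg * Im z}"
  obtain fL where fL: "(f \<longlongrightarrow> fL) ?F" "cmod fL ^ 2 = w"
    using f by blast
  obtain sL where sL: "\<forall>j. (s j \<longlongrightarrow> sL j) ?F" "\<forall>j. cmod (sL j) ^ 2 = cmod (d j)"
    using s by metis
  have "((\<lambda>z. cscale (f z) (Q z ** cdiag (\<lambda>j. s j z))) \<longlongrightarrow> cscale fL (Q (of_real x) ** cdiag sL)) ?F"
    using Q by (intro tendsto_cscale_mult_cdiag fL(1) sL(1) allI tendsto_within_subset[OF isContD]) auto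
  then have "bv_factor (\<lambda>z. cscale (f z) (Q z ** cdiag (\<lambda>j. s j z))) sg x
      (cscale fL (Q (of_real x) ** cdiag sL) ** mat_adj (cscale fL (Q (of_real x) ** cdiag sL)))"
    by (rule bv_factor_of_tendsto_within[OF _ sg])
  moreover have "(\<lambda>j. of_real (cmod (sL j) ^ 2)) = d"
    using sL(2) d
    by (auto simp: nonneg_Reals_cmod_eq_Re complex_nonneg_Reals_iff complex_eq_iff simp del: of_real_power)
  ultimately show ?thesis
    by (simp only: cscale_mult_cdiag_mult_adj fL(2))
qed

lemma herm_pos_def_unitary_diag_pos:
  fixes Q :: "complex^'n^'n"
  assumes Q: "unitary_mat Q" and pos: "herm_pos_def (Q ** cdiag d ** mat_adj Q)"
  shows "d j \<in> \<real> \<and> 0 < Re (d j)"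
proof -
  define M where "M = Q ** cdiag d ** mat_adj Q"
  define v where "v = (\<chi> i. Q $ i $ j)"
  have QQ: "mat_adj Q ** Q = mat 1"
    using Q by (simp add: unitary_mat_def)
  have "v \<noteq> 0"
  proof
    assume "v = 0"
    then have "(mat_adj Q ** Q) $ j $ j = 0"
      by (simp add: v_def vec_eq_iff matrix_matrix_mult_def mat_adj_def)
    then show False
      using QQ by (simp add: mat_def)
  qed
  have "(\<Sum>i\<in>UNIV. \<Sum>k\<in>UNIV. cnj (v $ i) * M $ i $ k * v $ k) = (mat_adj Q ** M ** Q) $ j $ j"
    by (simp add: v_def matrix_matrix_mult_def mat_adj_def sum_distrib_left sum_distrib_right mult_ac)
      (rule sum.swap)
  also have "mat_adj Q ** M ** Q = (mat_adj Q ** Q) ** cdiag d ** (mat_adj Q ** Q)"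
    by (simp add: M_def matrix_mul_assoc)
  finally have "(\<Sum>i\<in>UNIV. \<Sum>k\<in>UNIV. cnj (v $ i) * M $ i $ k * v $ k) = d j"
    using QQ by (simp add: cdiag_def)
  moreover have "let q = (\<Sum>i\<in>UNIV. \<Sum>k\<in>UNIV. cnj (v $ i) * M $ i $ k * v $ k) in Im q = 0 \<and> 0 < Re q"
    using pos \<open>v \<noteq> 0\<close> unfolding herm_pos_def_def M_def by blast
  ultimately show ?thesis
    by (simp add: Let_def complex_is_Real_iff)
qed

lemma bv_factor_V_plus1:
  fixes Q :: "complex \<Rightarrow> complex^'n^'n" and lam s :: "'n \<Rightarrow> complex \<Rightarrow> complex"
  assumes N: "open N" "convex N" "1 \<in> N" and x: "x \<in> {-1<..<1}" "of_real x \<in> N"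
    and Q: "\<forall>i j. isCont (\<lambda>z. Q z $ i $ j) (of_real x)"
    and lam: "\<forall>j. lam j holomorphic_on N" "\<forall>j. lam j (of_real x) \<in> \<real> \<and> 0 < Re (lam j (of_real x))"
    and s: "\<forall>j. s j holomorphic_on (N - {z. z \<in> \<real> \<and> Re z \<le> 1})"
      "\<forall>j. \<exists>\<delta>>0. \<forall>y\<in>{1<..<1+\<delta>}. s j (of_real y) = csqrt (c j * lam j (of_real y))"
      "\<forall>j. cmod (c j) = 1"
    and sg: "sg \<noteq> 0"
  shows "bv_factor (V_plus1 \<alpha> \<beta> Q s) sg x
           (((1 - x) powr \<alpha> * (1 + x) powr \<beta>) *\<^sub>R
              (Q (of_real x) ** cdiag (\<lambda>j. lam j (of_real x)) ** mat_adj (Q (of_real x))))"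
proof -
  have lam_x: "lam j (of_real x) \<notin> \<real>\<^sub>\<le>\<^sub>0" "lam j (of_real x) \<in> \<real>\<^sub>\<ge>\<^sub>0" for j
    using lam(2)[rule_format, of j]
    by (auto simp: complex_nonpos_Reals_iff complex_nonneg_Reals_iff complex_is_Real_iff)
  have "\<forall>j. \<exists>L. (s j \<longlongrightarrow> L) (at (of_real x) within {z. 0 < sg * Im z})
      \<and> cmod L ^ 2 = cmod (lam j (of_real x))"
    using sqrt_branch_boundary_limit_right[of N 1, OF N(1,2) _ lam(1)[rule_format] s(1)[rule_format]
        s(2)[rule_format] x(2) lam_x(1) sg] N(3) s(3) by simp
  then show ?thesis
    unfolding V_plus1_def[abs_def]
    using jacobi_root_boundary_limit[OF x(1), of 1 sg \<alpha> \<beta>] Q lam_x(2) sg by (intro bv_factor_of_boundary_limits) simp_all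
qed

lemma bv_factor_V_minus1:
  fixes Q :: "complex \<Rightarrow> complex^'n^'n" and lam t :: "'n \<Rightarrow> complex \<Rightarrow> complex"
  assumes N: "open N" "convex N" "-1 \<in> N" and x: "x \<in> {-1<..<1}" "of_real x \<in> N"
    and Q: "\<forall>i j. isCont (\<lambda>z. Q z $ i $ j) (of_real x)"
    and lam: "\<forall>j. lam j holomorphic_on N" "\<forall>j. lam j (of_real x) \<in> \<real> \<and> 0 < Re (lam j (of_real x))"
    and t: "\<forall>j. t j holomorphic_on (N - {z. z \<in> \<real> \<and> Re z \<ge> -1})"
      "\<forall>j. \<exists>\<delta>>0. \<forall>y\<in>{-1-\<delta><..<-1}. t j (of_real y) = csqrt (c j * lam j (of_real y))"
      "\<forall>j. cmod (c j) = 1"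
    and sg: "sg \<noteq> 0"
  shows "bv_factor (V_minus1 \<alpha> \<beta> Q t) sg x
           (((1 - x) powr \<alpha> * (1 + x) powr \<beta>) *\<^sub>R
              (Q (of_real x) ** cdiag (\<lambda>j. lam j (of_real x)) ** mat_adj (Q (of_real x))))"
proof -
  have lam_x: "lam j (of_real x) \<notin> \<real>\<^sub>\<le>\<^sub>0" "lam j (of_real x) \<in> \<real>\<^sub>\<ge>\<^sub>0" for j
    using lam(2)[rule_format, of j]
    by (auto simp: complex_nonpos_Reals_iff complex_nonneg_Reals_iff complex_is_Real_iff)
  have reorder: "- z - 1 = - 1 - z" for z :: complex
    by simp
  have "\<forall>j. \<exists>L. (t j \<longlongrightarrow> L) (at (of_real x) within {z. 0 < sg * Im z})
      \<and> cmod L ^ 2 = cmod (lam j (of_real x))"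
    using sqrt_branch_boundary_limit_left[of N "-1", OF N(1,2) _ lam(1)[rule_format] t(1)[rule_format]
        t(2)[rule_format] x(2) lam_x(1) sg] N(3) t(3) by simp
  then show ?thesis
    unfolding V_minus1_def[abs_def]
    using jacobi_root_boundary_limit[OF x(1), of "-1" sg \<alpha> \<beta>] Q lam_x(2) sg by (intro bv_factor_of_boundary_limits) (simp_all add: reorder)
qed

theorem lemma1p6:
  fixes \<alpha> \<beta> :: real
    and H :: "real \<Rightarrow> complex^'n^'n"
    and N :: "complex set"
    and Q :: "complex \<Rightarrow> complex^'n^'n"
    and lam :: "'n \<Rightarrow> complex \<Rightarrow> complex"
    and s t :: "'n \<Rightarrow> complex \<Rightarrow> complex"
  assumes \<alpha>: "\<alpha> > -1" and \<beta>: "\<beta> > -1"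
    and H_pd: "\<forall>x\<in>{-1<..<1}. herm_pos_def (H x)"
    and H_analytic: "\<exists>U Hc. open U \<and> of_real ` {-1..1} \<subseteq> U \<and>
          (\<forall>i j. (\<lambda>z. Hc z $ i $ j) holomorphic_on U) \<and>
          (\<forall>x\<in>{-1..1}. Hc (of_real x) = H x)"
    and H_end: "H 1 \<noteq> 0" "H (-1) \<noteq> 0"
    and N: "open N" "convex N" "of_real ` {-1..1} \<subseteq> N"
    and Q_hol: "\<forall>i j. (\<lambda>z. Q z $ i $ j) holomorphic_on N"
    and lam_hol: "\<forall>j. lam j holomorphic_on N"
    and Q_unitary: "\<forall>x\<in>{-1..1}. unitary_mat (Q (of_real x))"
    and lam_real: "\<forall>j. \<forall>x\<in>{-1..1}. lam j (of_real x) \<in> \<real>"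
    and H_fact: "\<forall>x\<in>{-1..1}. H x = Q (of_real x) ** cdiag (\<lambda>j. lam j (of_real x)) ** mat_adj (Q (of_real x))"
    and lam_nz: "\<forall>j. \<forall>z\<in>N - {1, -1}. lam j z \<noteq> 0"
    and s_hol: "\<forall>j. s j holomorphic_on (N - {z. z \<in> \<real> \<and> Re z \<le> 1})"
    and s_pos: "\<forall>j. \<exists>\<delta>>0. \<forall>x\<in>{1<..<1+\<delta>}.
          s j (of_real x) = csqrt ((-1) ^ vanish_order (lam j) 1 * lam j (of_real x))"
    and t_hol: "\<forall>j. t j holomorphic_on (N - {z. z \<in> \<real> \<and> Re z \<ge> -1})"
    and t_pos: "\<forall>j. \<exists>\<delta>>0. \<forall>x\<in>{-1-\<delta><..<-1}.
          t j (of_real x) = csqrt ((-1) ^ vanish_order (lam j) (-1) * lam j (of_real x))"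
  shows "\<forall>x\<in>{-1<..<1}.
     (let Wx = ((1 - x) powr \<alpha> * (1 + x) powr \<beta>) *\<^sub>R H x in
        bv_factor (V_plus1 \<alpha> \<beta> Q s) (-1) x Wx \<and>
        bv_factor (V_plus1 \<alpha> \<beta> Q s) 1 x Wx \<and>
        bv_factor (V_minus1 \<alpha> \<beta> Q t) (-1) x Wx \<and>
        bv_factor (V_minus1 \<alpha> \<beta> Q t) 1 x Wx)"
proof (intro ballI)
  fix x :: real
  assume x: "x \<in> {-1<..<1}"
  have N_x: "of_real x \<in> N" and N_ends: "1 \<in> N" "-1 \<in> N"
    using x N(3)[unfolded image_subset_iff] by (auto dest: bspec[of _ _ 1] bspec[of _ _ "-1"])
  have H_x: "H x = Q (of_real x) ** cdiag (\<lambda>j. lam j (of_real x)) ** mat_adj (Q (of_real x))"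
    using H_fact x by auto
  have lam_x: "\<forall>j. lam j (of_real x) \<in> \<real> \<and> 0 < Re (lam j (of_real x))"
    using x by (intro allI herm_pos_def_unitary_diag_pos[where Q = "Q (of_real x)"])
      (auto simp flip: H_x simp: Q_unitary H_pd)
  have Q_x: "\<forall>i j. isCont (\<lambda>z. Q z $ i $ j) (of_real x)"
    using N(1) N_x holomorphic_on_imp_continuous_on[OF Q_hol[rule_format]]
    by (simp add: continuous_on_eq_continuous_at)
  have "bv_factor (V_plus1 \<alpha> \<beta> Q s) sg x (((1 - x) powr \<alpha> * (1 + x) powr \<beta>) *\<^sub>R H x)"
    if "sg \<noteq> 0" for sg
    unfolding H_x
    by (rule bv_factor_V_plus1[OF N(1,2) N_ends(1) x N_x Q_x lam_hol lam_x s_hol s_pos _ that])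
      (simp add: norm_power)
  moreover have "bv_factor (V_minus1 \<alpha> \<beta> Q t) sg x (((1 - x) powr \<alpha> * (1 + x) powr \<beta>) *\<^sub>R H x)"
    if "sg \<noteq> 0" for sg
    unfolding H_x
    by (rule bv_factor_V_minus1[OF N(1,2) N_ends(2) x N_x Q_x lam_hol lam_x t_hol t_pos _ that])
      (simp add: norm_power)
  ultimately show "let Wx = ((1 - x) powr \<alpha> * (1 + x) powr \<beta>) *\<^sub>R H x in
        bv_factor (V_plus1 \<alpha> \<beta> Q s) (-1) x Wx \<and>
        bv_factor (V_plus1 \<alpha> \<beta> Q s) 1 x Wx \<and>
        bv_factor (V_minus1 \<alpha> \<beta> Q t) (-1) x Wx \<and>
        bv_factor (V_minus1 \<alpha> \<beta> Q t) 1 x Wx"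
    by simp
qed

end
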